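(* Let $g$ be of $n^\alpha$ type. Let $X_N$ have distribution $\mathcal P_{N^\beta\varphi}$ for some $\beta>\alpha$ and $\varphi\ge0$. Then for any $r_0<\beta/\alpha$ and $\delta>0$, $$\lim_{N\to\infty}N^{-r_0}\ln P\big[|N^{-\beta/\alpha}X_N-\varphi^{1/\alpha}|\ge\delta\big]=-\infty .$$
   Context: $g:\mathbb N_0\to[0,\infty)$ with $g(n)=0$ iff $n=0$, $|g(n+1)-g(n)|\le g^*$, nondecreasing, $\lim_{n\to\infty}g(n)/n^\alpha=1$ with $\alpha\in(0,1]$. $g(0)!=1$, $g(n)!=\prod_{i=1}^ng(i)$, $Z(\phi)=\sum_n\phi^n/g(n)!$, $\mathcal P_\phi(n)=\phi^n/(g(n)!Z(\phi))$ for $\phi\ge0$. *)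

theory Defs
  imports "HOL-Analysis.Analysis"
begin

definition n_alpha_type :: "(nat \<Rightarrow> real) \<Rightarrow> real \<Rightarrow> bool" where
  "n_alpha_type g \<alpha> \<longleftrightarrow>
     0 < \<alpha> \<and> \<alpha> \<le> 1 \<and>
     (\<forall>n. g n \<ge> 0) \<and> (\<forall>n. g n = 0 \<longleftrightarrow> n = 0) \<and>
     (\<exists>gstar. \<forall>n. \<bar>g (Suc n) - g n\<bar> \<le> gstar) \<and>
     mono g \<and>
     ((\<lambda>n. g n / (real n powr \<alpha>)) \<longlonglongrightarrow> 1)"

definition gfact :: "(nat \<Rightarrow> real) \<Rightarrow> nat \<Rightarrow> real" where
  "gfact g n = (\<Prod>i=1..n. g i)"

definition Zpart :: "(nat \<Rightarrow> real) \<Rightarrow> real \<Rightarrow> real" where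
  "Zpart g \<phi> = (\<Sum>n. \<phi> ^ n / gfact g n)"

definition Pdist :: "(nat \<Rightarrow> real) \<Rightarrow> real \<Rightarrow> nat \<Rightarrow> real" where
  "Pdist g \<phi> n = \<phi> ^ n / (gfact g n * Zpart g \<phi>)"

definition Pevent :: "(nat \<Rightarrow> real) \<Rightarrow> real \<Rightarrow> nat set \<Rightarrow> real" where
  "Pevent g \<phi> A = (\<Sum>n. if n \<in> A then Pdist g \<phi> n else 0)"

definition lnE :: "real \<Rightarrow> ereal" where
  "lnE x = (if x = 0 then -\<infinity> else ereal (ln x))"

end

theory Submission
  imports Defs "HOL-Real_Asymp.Real_Asymp"
begin

(* Put c = phi^(1/alpha) and M = N^(beta/alpha), so that the parameter is psi = N^beta phi = (c M)^alpha.
   The weights w n = psi^n / g(n)! satisfy w (n+1) / w n = psi / g (n+1), roughly (c M / n)^alpha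
   because g n ~ n^alpha. Hence for a' < c < a there is rho < 1 such that w decays geometrically
   at rate rho upwards from a M and downwards from a' M. The event |n / M - c| >= delta lies at
   distance at least delta M / 2 beyond these two points, so its probability is O(rho^(delta M / 2)),
   i.e. its logarithm is at most - kappa N^(beta/alpha), which dominates N^r0 for every r0 < beta/alpha. *)

lemma geometric_decay_upward:
  fixes w :: "nat \<Rightarrow> real"
  assumes ratio: "\<And>n. m \<le> n \<Longrightarrow> w (Suc n) \<le> \<rho> * w n" and "0 \<le> \<rho>" and "m \<le> n"
  shows "w n \<le> \<rho> ^ (n - m) * w m"
  using \<open>m \<le> n\<close>
proof (induction n rule: dec_induct)
  case (step n)
  have "w (Suc n) \<le> \<rho> * (\<rho> ^ (n - m) * w m)"
    using ratio[OF step.hyps(1)] mult_left_mono[OF step.IH \<open>0 \<le> \<rho>\<close>] by linarith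
  then show ?case
    using step.hyps(1) by (simp add: Suc_diff_le)
qed simp

lemma geometric_decay_downward:
  fixes w :: "nat \<Rightarrow> real"
  assumes ratio: "\<And>n. n < m \<Longrightarrow> w n \<le> \<rho> * w (Suc n)" and "0 \<le> \<rho>" and "n \<le> m"
  shows "w n \<le> \<rho> ^ (m - n) * w m"
  using \<open>n \<le> m\<close>
proof (induction n rule: inc_induct)
  case (step n)
  have "w n \<le> \<rho> * (\<rho> ^ (m - Suc n) * w m)"
    using ratio[OF step.hyps(2)] mult_left_mono[OF step.IH \<open>0 \<le> \<rho>\<close>] by linarith
  moreover have "m - n = Suc (m - Suc n)"
    using step.hyps(2) by simp
  ultimately show ?case
    by simp
qed simp

lemma sum_power_reverse_le:
  fixes \<rho> :: real
  assumes "0 \<le> \<rho>" "\<rho> < 1"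
  shows "(\<Sum>n\<le>j. \<rho> ^ (j - n)) \<le> 1 / (1 - \<rho>)"
proof (induction j)
  case (Suc j)
  have "(\<Sum>n\<le>Suc j. \<rho> ^ (Suc j - n)) = 1 + \<rho> * (\<Sum>n\<le>j. \<rho> ^ (j - n))"
    by (simp add: sum_distrib_left Suc_diff_le)
  also have "\<dots> \<le> 1 + \<rho> * (1 / (1 - \<rho>))"
    using Suc assms by (intro add_left_mono mult_left_mono) auto
  finally show ?case
    using assms by (simp add: field_simps)
qed (use assms in \<open>simp add: field_simps\<close>)

lemma sum_power_lower_tail_le:
  fixes \<rho> :: real
  assumes "0 \<le> \<rho>" "\<rho> < 1"
  shows "(\<Sum>n | n + k \<le> m. \<rho> ^ (m - n)) \<le> \<rho> ^ k / (1 - \<rho>)"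
proof (cases "k \<le> m")
  case True
  then have "{n. n + k \<le> m} = {..m - k}"
    by auto
  moreover have "\<rho> ^ (m - n) = \<rho> ^ k * \<rho> ^ (m - k - n)" if "n \<le> m - k" for n
    using that True by (simp flip: power_add)
  ultimately have "(\<Sum>n | n + k \<le> m. \<rho> ^ (m - n)) = \<rho> ^ k * (\<Sum>n\<le>m - k. \<rho> ^ (m - k - n))"
    by (simp add: sum_distrib_left)
  also have "\<dots> \<le> \<rho> ^ k * (1 / (1 - \<rho>))"
    using sum_power_reverse_le[OF assms, of "m - k"] assms by (intro mult_left_mono) auto
  finally show ?thesis
    by simp
next
  case False
  then have "{n. n + k \<le> m} = {}"
    by auto
  then show ?thesis
    using assms by simp
qed

lemma sums_power_upper_tail:
  fixes \<rho> :: real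
  assumes "0 \<le> \<rho>" "\<rho> < 1"
  shows "(\<lambda>n. if m + k \<le> n then \<rho> ^ (n - m) else 0) sums (\<rho> ^ k / (1 - \<rho>))"
proof -
  have "(\<lambda>i. \<rho> ^ k * \<rho> ^ i) sums (\<rho> ^ k * (1 / (1 - \<rho>)))"
    using geometric_sums[of \<rho>] assms by (intro sums_mult) auto
  then have "(\<lambda>i. if m + k \<le> i + (m + k) then \<rho> ^ (i + (m + k) - m) else 0) sums (\<rho> ^ k / (1 - \<rho>))"
    by (simp add: power_add mult.commute)
  then show ?thesis
    by (subst (asm) sums_zero_iff_shift) auto
qed

lemma suminf_le_two_geometric_tails:
  fixes f :: "nat \<Rightarrow> real"
  assumes f_nonneg: "\<And>n. 0 \<le> f n" and \<rho>: "0 \<le> \<rho>" "\<rho> < 1"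
    and lower: "\<And>n. n + k \<le> m\<^sub>2 \<Longrightarrow> f n \<le> \<rho> ^ (m\<^sub>2 - n)"
    and upper: "\<And>n. m\<^sub>1 + k \<le> n \<Longrightarrow> f n \<le> \<rho> ^ (n - m\<^sub>1)"
    and between: "\<And>n. m\<^sub>2 < n + k \<Longrightarrow> n < m\<^sub>1 + k \<Longrightarrow> f n = 0"
  shows "suminf f \<le> 2 * \<rho> ^ k / (1 - \<rho>)"
proof -
  define B\<^sub>1 where "B\<^sub>1 n = (if n \<in> {n. n + k \<le> m\<^sub>2} then \<rho> ^ (m\<^sub>2 - n) else 0)" for n
  define B\<^sub>2 where "B\<^sub>2 n = (if m\<^sub>1 + k \<le> n then \<rho> ^ (n - m\<^sub>1) else 0)" for n
  have "finite {n. n + k \<le> m\<^sub>2}"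
    by (rule finite_subset[of _ "{..m\<^sub>2}"]) auto
  then have "B\<^sub>1 sums (\<Sum>n | n + k \<le> m\<^sub>2. \<rho> ^ (m\<^sub>2 - n))"
    unfolding B\<^sub>1_def by (rule sums_If_finite_set)
  from sums_add[OF this sums_power_upper_tail[OF \<rho>, of m\<^sub>1 k, folded B\<^sub>2_def]]
  have B_sums: "(\<lambda>n. B\<^sub>1 n + B\<^sub>2 n) sums ((\<Sum>n | n + k \<le> m\<^sub>2. \<rho> ^ (m\<^sub>2 - n)) + \<rho> ^ k / (1 - \<rho>))" .
  then have "summable (\<lambda>n. B\<^sub>1 n + B\<^sub>2 n)"
    by (simp add: sums_iff)
  have f_le: "f n \<le> B\<^sub>1 n + B\<^sub>2 n" for n
    using lower[of n] upper[of n] between[of n] \<rho>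
    by (cases "n + k \<le> m\<^sub>2"; cases "m\<^sub>1 + k \<le> n") (auto simp: B\<^sub>1_def B\<^sub>2_def intro: add_increasing2)
  have "summable f"
    using \<open>summable (\<lambda>n. B\<^sub>1 n + B\<^sub>2 n)\<close>
    by (rule summable_comparison_test'[where N = 0]) (use f_le f_nonneg in simp)
  then have "suminf f \<le> (\<Sum>n. B\<^sub>1 n + B\<^sub>2 n)"
    using f_le \<open>summable (\<lambda>n. B\<^sub>1 n + B\<^sub>2 n)\<close> by (intro suminf_le)
  also have "\<dots> = (\<Sum>n | n + k \<le> m\<^sub>2. \<rho> ^ (m\<^sub>2 - n)) + \<rho> ^ k / (1 - \<rho>)"
    using B_sums by (simp add: sums_iff)
  also have "\<dots> \<le> 2 * \<rho> ^ k / (1 - \<rho>)"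
    using sum_power_lower_tail_le[OF \<rho>, of m\<^sub>2 k] by simp
  finally show ?thesis .
qed

lemma power_nat_floor_le_exp:
  fixes \<rho> x :: real
  assumes "0 < \<rho>" and "\<rho> \<le> 1"
  shows "\<rho> ^ nat \<lfloor>x\<rfloor> \<le> exp (ln \<rho> * (x - 1))"
proof -
  have "\<rho> ^ nat \<lfloor>x\<rfloor> = exp (ln \<rho>) ^ nat \<lfloor>x\<rfloor>"
    using \<open>0 < \<rho>\<close> by simp
  also have "\<dots> = exp (ln \<rho> * real (nat \<lfloor>x\<rfloor>))"
    by (simp add: mult.commute flip: exp_of_nat_mult)
  also have "\<dots> \<le> exp (ln \<rho> * (x - 1))"
    using assms by (simp add: mult_le_cancel_left) linarith
  finally show ?thesis .
qed

definition gweight :: "(nat \<Rightarrow> real) \<Rightarrow> real \<Rightarrow> nat \<Rightarrow> real" where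
  "gweight g \<psi> n = \<psi> ^ n / gfact g n"

lemma gfact_Suc: "gfact g (Suc n) = gfact g n * g (Suc n)"
  unfolding gfact_def by (simp add: prod.nat_ivl_Suc')

lemma gfact_pos:
  assumes "\<And>n. 0 < n \<Longrightarrow> 0 < g n"
  shows "0 < gfact g n"
  by (induction n) (simp_all add: gfact_def gfact_Suc assms)

lemma gweight_0 [simp]: "gweight g \<psi> 0 = 1"
  by (simp add: gweight_def gfact_def)

lemma gweight_Suc: "gweight g \<psi> (Suc n) = gweight g \<psi> n * (\<psi> / g (Suc n))"
  by (simp add: gweight_def gfact_Suc)

lemma gweight_nonneg:
  assumes "\<And>n. 0 < n \<Longrightarrow> 0 < g n" and "0 \<le> \<psi>"
  shows "0 \<le> gweight g \<psi> n"
  using gfact_pos[of g n, OF assms(1)] assms(2) by (simp add: gweight_def)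

lemma gweight_Suc_le:
  assumes gpos: "\<And>n. 0 < n \<Longrightarrow> 0 < g n" and "0 \<le> \<psi>" and "\<psi> \<le> \<rho> * g (Suc n)"
  shows "gweight g \<psi> (Suc n) \<le> \<rho> * gweight g \<psi> n"
proof -
  have "\<psi> / g (Suc n) \<le> \<rho>"
    using assms gpos[of "Suc n"] by (simp add: divide_le_eq)
  then have "gweight g \<psi> n * (\<psi> / g (Suc n)) \<le> gweight g \<psi> n * \<rho>"
    using gweight_nonneg[of g \<psi> n, OF gpos \<open>0 \<le> \<psi>\<close>] by (rule mult_left_mono)
  then show ?thesis
    by (simp add: gweight_Suc mult.commute)
qed

lemma gweight_le_Suc:
  assumes gpos: "\<And>n. 0 < n \<Longrightarrow> 0 < g n" and "0 < \<psi>" and "g (Suc n) \<le> \<rho> * \<psi>"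
  shows "gweight g \<psi> n \<le> \<rho> * gweight g \<psi> (Suc n)"
proof -
  have "gweight g \<psi> n = gweight g \<psi> (Suc n) * (g (Suc n) / \<psi>)"
    using gpos[of "Suc n"] \<open>0 < \<psi>\<close> by (simp add: gweight_Suc)
  also have "\<dots> \<le> gweight g \<psi> (Suc n) * \<rho>"
    using assms gweight_nonneg[of g \<psi> "Suc n", OF gpos] by (intro mult_left_mono) (simp_all add: divide_le_eq)
  finally show ?thesis
    by (simp add: mult.commute)
qed

lemma summable_gweight:
  assumes gpos: "\<And>n. 0 < n \<Longrightarrow> 0 < g n" and "0 \<le> \<psi>" and "\<rho> < 1"
    and above: "\<And>i. m < i \<Longrightarrow> \<psi> \<le> \<rho> * g i"
  shows "summable (gweight g \<psi>)"
proof (rule summable_ratio_test[OF \<open>\<rho> < 1\<close>, of m])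
  fix n assume "m \<le> n"
  then show "norm (gweight g \<psi> (Suc n)) \<le> \<rho> * norm (gweight g \<psi> n)"
    using gweight_Suc_le[of g \<psi> \<rho> n, OF gpos \<open>0 \<le> \<psi>\<close> above] gweight_nonneg[of g \<psi>, OF gpos \<open>0 \<le> \<psi>\<close>]
    by simp
qed

lemma Zpart_eq_suminf: "Zpart g \<psi> = suminf (gweight g \<psi>)"
  by (simp add: Zpart_def gweight_def[abs_def])

lemma Pdist_eq: "Pdist g \<psi> n = gweight g \<psi> n / Zpart g \<psi>"
  by (simp add: Pdist_def gweight_def)

lemma gweight_le_Zpart:
  assumes gpos: "\<And>n. 0 < n \<Longrightarrow> 0 < g n" and "0 \<le> \<psi>" and "summable (gweight g \<psi>)"
  shows "gweight g \<psi> n \<le> Zpart g \<psi>"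
proof -
  have "sum (gweight g \<psi>) {n} \<le> suminf (gweight g \<psi>)"
    using assms(3) gweight_nonneg[of g \<psi>, OF gpos \<open>0 \<le> \<psi>\<close>] by (intro sum_le_suminf) auto
  then show ?thesis
    by (simp add: Zpart_eq_suminf)
qed

lemma Pdist_le:
  assumes gpos: "\<And>n. 0 < n \<Longrightarrow> 0 < g n" and "0 \<le> \<psi>" and "summable (gweight g \<psi>)"
    and "0 \<le> C" and "gweight g \<psi> n \<le> C * gweight g \<psi> m"
  shows "Pdist g \<psi> n \<le> C"
proof -
  have "0 < Zpart g \<psi>"
    using gweight_le_Zpart[OF assms(1-3), of 0] by simp
  moreover have "gweight g \<psi> n \<le> C * Zpart g \<psi>"
    using assms(5) mult_left_mono[OF gweight_le_Zpart[OF assms(1-3), of m] \<open>0 \<le> C\<close>] by linarith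
  ultimately show ?thesis
    by (simp add: Pdist_eq divide_le_eq)
qed

lemma Pdist_nonneg:
  assumes gpos: "\<And>n. 0 < n \<Longrightarrow> 0 < g n" and "0 \<le> \<psi>" and "summable (gweight g \<psi>)"
  shows "0 \<le> Pdist g \<psi> n"
  using gweight_nonneg[of g \<psi> n, OF gpos \<open>0 \<le> \<psi>\<close>] gweight_le_Zpart[OF assms, of n]
  by (simp add: Pdist_eq)

lemma Pevent_nonneg:
  assumes gpos: "\<And>n. 0 < n \<Longrightarrow> 0 < g n" and "0 \<le> \<psi>" and "summable (gweight g \<psi>)"
  shows "0 \<le> Pevent g \<psi> A"
proof -
  note Pdist_nonneg = Pdist_nonneg[OF assms]
  have "summable (\<lambda>n. Pdist g \<psi> n)"
    using summable_divide[OF assms(3), of "Zpart g \<psi>"] by (simp add: Pdist_eq)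
  then have "summable (\<lambda>n. if n \<in> A then Pdist g \<psi> n else 0)"
    by (rule summable_comparison_test'[where N = 0]) (use Pdist_nonneg in auto)
  then show ?thesis
    unfolding Pevent_def using Pdist_nonneg by (intro suminf_nonneg) auto
qed

lemma Pevent_zero_weight:
  assumes "0 \<notin> A"
  shows "Pevent g 0 A = 0"
proof -
  have "(\<lambda>n. if n \<in> A then Pdist g 0 n else 0) = (\<lambda>n. 0)"
    using assms by (auto simp: Pdist_def fun_eq_iff)
  then show ?thesis
    by (simp add: Pevent_def)
qed

lemma Pevent_le_two_tails:
  assumes gpos: "\<And>n. 0 < n \<Longrightarrow> 0 < g n" and "0 < \<psi>" and "\<rho> < 1"
    and above: "\<And>i. m\<^sub>1 < i \<Longrightarrow> \<psi> \<le> \<rho> * g i"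
    and below: "\<And>i. 0 < i \<Longrightarrow> i \<le> m\<^sub>2 \<Longrightarrow> g i \<le> \<rho> * \<psi>"
    and A: "\<And>n. n \<in> A \<Longrightarrow> n + k \<le> m\<^sub>2 \<or> m\<^sub>1 + k \<le> n"
  shows "Pevent g \<psi> A \<le> 2 * \<rho> ^ k / (1 - \<rho>)"
proof -
  have "0 < \<rho> * g (Suc m\<^sub>1)"
    using above[of "Suc m\<^sub>1"] \<open>0 < \<psi>\<close> by simp
  then have "0 < \<rho>"
    using gpos[of "Suc m\<^sub>1"] by (simp add: zero_less_mult_iff)
  have summable: "summable (gweight g \<psi>)"
    using \<open>0 < \<psi>\<close> by (intro summable_gweight[OF gpos _ \<open>\<rho> < 1\<close> above]) auto
  note Pdist_le = Pdist_le[OF gpos _ summable] and Pdist_nonneg = Pdist_nonneg[OF gpos _ summable]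
  have upper: "Pdist g \<psi> n \<le> \<rho> ^ (n - m\<^sub>1)" if "m\<^sub>1 \<le> n" for n
  proof (rule Pdist_le)
    show "gweight g \<psi> n \<le> \<rho> ^ (n - m\<^sub>1) * gweight g \<psi> m\<^sub>1"
      using that \<open>0 < \<psi>\<close> \<open>0 < \<rho>\<close>
      by (intro geometric_decay_upward gweight_Suc_le[OF gpos] above) auto
  qed (use \<open>0 < \<psi>\<close> \<open>0 < \<rho>\<close> in auto)
  have lower: "Pdist g \<psi> n \<le> \<rho> ^ (m\<^sub>2 - n)" if "n \<le> m\<^sub>2" for n
  proof (rule Pdist_le)
    show "gweight g \<psi> n \<le> \<rho> ^ (m\<^sub>2 - n) * gweight g \<psi> m\<^sub>2"
      using that \<open>0 < \<psi>\<close> \<open>0 < \<rho>\<close>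
      by (intro geometric_decay_downward gweight_le_Suc[OF gpos] below) auto
  qed (use \<open>0 < \<psi>\<close> \<open>0 < \<rho>\<close> in auto)
  show ?thesis
    unfolding Pevent_def
    by (rule suminf_le_two_geometric_tails[where m\<^sub>1 = m\<^sub>1 and m\<^sub>2 = m\<^sub>2])
      (use \<open>0 < \<psi>\<close> \<open>0 < \<rho>\<close> \<open>\<rho> < 1\<close> Pdist_nonneg upper lower in \<open>auto dest: A\<close>)
qed

lemma n_alpha_type_pos:
  assumes "n_alpha_type g \<alpha>" and "0 < n"
  shows "0 < g n"
  using assms unfolding n_alpha_type_def by (metis less_eq_real_def not_gr0)

lemma n_alpha_type_eventually_bounds:
  assumes g: "n_alpha_type g \<alpha>" and "1 < t"
  obtains n\<^sub>0 where "\<And>n. n\<^sub>0 \<le> n \<Longrightarrow> real n powr \<alpha> \<le> t * g n \<and> g n \<le> t * real n powr \<alpha>"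
proof -
  have lim: "(\<lambda>n. g n / real n powr \<alpha>) \<longlonglongrightarrow> 1"
    using g by (simp add: n_alpha_type_def)
  have "1 / t < 1"
    using \<open>1 < t\<close> by simp
  then have "\<forall>\<^sub>F n in sequentially. 1 / t < g n / real n powr \<alpha> \<and> g n / real n powr \<alpha> < t \<and> 0 < n"
    using order_tendstoD(2)[OF lim \<open>1 < t\<close>] eventually_gt_at_top
    by (intro eventually_conj order_tendstoD(1)[OF lim])
  then obtain n\<^sub>0 where n\<^sub>0: "\<And>n. n\<^sub>0 \<le> n \<Longrightarrow> 1 / t < g n / real n powr \<alpha> \<and> g n / real n powr \<alpha> < t \<and> 0 < n"
    by (auto simp: eventually_sequentially)
  show thesis
  proof (rule that)
    fix n assume "n\<^sub>0 \<le> n"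
    then have "1 / t < g n / real n powr \<alpha>" "g n / real n powr \<alpha> < t" "0 < real n powr \<alpha>"
      using n\<^sub>0 by auto
    with \<open>1 < t\<close> show "real n powr \<alpha> \<le> t * g n \<and> g n \<le> t * real n powr \<alpha>"
      by (simp add: field_simps)
  qed
qed

lemma powr_scale_le_of_lower_bound:
  assumes lower: "\<And>n. n\<^sub>0 \<le> n \<Longrightarrow> real n powr \<alpha> \<le> t * g n" and "0 \<le> g i"
    and "0 \<le> \<alpha>" and "0 \<le> c" and "0 < a" and "t * (c / a) powr \<alpha> \<le> \<rho>"
    and "real n\<^sub>0 \<le> a * M" and "a * M < real i"
  shows "(c * M) powr \<alpha> \<le> \<rho> * g i"
proof -
  have "0 \<le> a * M"
    using assms(7) by linarith
  have "n\<^sub>0 \<le> i"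
    using assms(7,8) by linarith
  have "(c * M) powr \<alpha> = (c / a) powr \<alpha> * (a * M) powr \<alpha>"
    using \<open>0 < a\<close> by (simp flip: powr_mult)
  also have "\<dots> \<le> (c / a) powr \<alpha> * real i powr \<alpha>"
    using assms(3,8) \<open>0 \<le> a * M\<close> by (intro mult_left_mono powr_mono2) auto
  also have "\<dots> \<le> (c / a) powr \<alpha> * (t * g i)"
    using lower[OF \<open>n\<^sub>0 \<le> i\<close>] by (intro mult_left_mono) auto
  also have "\<dots> = (t * (c / a) powr \<alpha>) * g i"
    by simp
  also have "\<dots> \<le> \<rho> * g i"
    using assms(6,2) by (rule mult_right_mono)
  finally show ?thesis .
qed

lemma le_powr_scale_of_upper_bound:
  assumes upper: "\<And>n. n\<^sub>0 \<le> n \<Longrightarrow> g n \<le> t * real n powr \<alpha>" and "mono g"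
    and "0 \<le> \<alpha>" and "0 < c" and "0 \<le> t" and "t * (a' / c) powr \<alpha> \<le> \<rho>"
    and "real n\<^sub>0 \<le> a' * M" and "real i \<le> a' * M"
  shows "g i \<le> \<rho> * (c * M) powr \<alpha>"
proof -
  define m where "m = nat \<lfloor>a' * M\<rfloor>"
  have "0 \<le> a' * M" and "real m \<le> a' * M"
    using assms(7) by (simp_all add: m_def of_nat_floor)
  have "n\<^sub>0 \<le> m" and "i \<le> m"
    using assms(7,8) by (simp_all add: m_def le_nat_floor)
  have "g i \<le> g m"
    using \<open>mono g\<close> \<open>i \<le> m\<close> by (rule monoD)
  also have "\<dots> \<le> t * real m powr \<alpha>"
    using upper[OF \<open>n\<^sub>0 \<le> m\<close>] .
  also have "\<dots> \<le> t * (a' * M) powr \<alpha>"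
    using assms(3,5) \<open>real m \<le> a' * M\<close> by (intro mult_left_mono powr_mono2) auto
  also have "(a' * M) powr \<alpha> = (a' / c) powr \<alpha> * (c * M) powr \<alpha>"
    using \<open>0 < c\<close> by (simp flip: powr_mult)
  also have "t * ((a' / c) powr \<alpha> * (c * M) powr \<alpha>) = (t * (a' / c) powr \<alpha>) * (c * M) powr \<alpha>"
    by simp
  also have "\<dots> \<le> \<rho> * (c * M) powr \<alpha>"
    using assms(6) by (rule mult_right_mono) simp
  finally show ?thesis .
qed

lemma n_alpha_type_ratio_bounds:
  assumes g: "n_alpha_type g \<alpha>" and "0 < a'" and "a' < c" and "c < a"
  obtains \<rho> n\<^sub>0 where "0 < \<rho>" and "\<rho> < 1"
    and "\<And>M i. real n\<^sub>0 \<le> a * M \<Longrightarrow> a * M < real i \<Longrightarrow> (c * M) powr \<alpha> \<le> \<rho> * g i"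
    and "\<And>M i. real n\<^sub>0 \<le> a' * M \<Longrightarrow> real i \<le> a' * M \<Longrightarrow> g i \<le> \<rho> * (c * M) powr \<alpha>"
proof -
  have "0 < \<alpha>" and g_nonneg: "\<And>n. 0 \<le> g n" and "mono g"
    using g by (auto simp: n_alpha_type_def)
  \<comment> \<open>Any \<rho> strictly between \<theta> and 1 leaves the factor t = \<rho> / \<theta> > 1 as room for the error in g n ~ n powr \<alpha>.\<close>
  define \<theta> where "\<theta> = max ((c / a) powr \<alpha>) ((a' / c) powr \<alpha>)"
  have "(c / a) powr \<alpha> < 1" and "(a' / c) powr \<alpha> < 1"
    using powr_less_mono2[OF \<open>0 < \<alpha>\<close>, of "c / a" 1] powr_less_mono2[OF \<open>0 < \<alpha>\<close>, of "a' / c" 1] assms(2-4)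
    by auto
  moreover have "0 < (a' / c) powr \<alpha>"
    using assms(2-4) by simp
  ultimately have "0 < \<theta>" and "\<theta> < 1"
    by (auto simp: \<theta>_def less_max_iff_disj)
  define \<rho> where "\<rho> = (1 + \<theta>) / 2"
  define t where "t = \<rho> / \<theta>"
  have "0 < \<rho>" "\<rho> < 1" "1 < t" "t * \<theta> = \<rho>"
    using \<open>0 < \<theta>\<close> \<open>\<theta> < 1\<close> by (auto simp: \<rho>_def t_def field_simps)
  have "t * (c / a) powr \<alpha> \<le> \<rho>" and "t * (a' / c) powr \<alpha> \<le> \<rho>"
    using \<open>1 < t\<close> \<open>t * \<theta> = \<rho>\<close> by (auto simp: \<theta>_def intro: order_trans[OF mult_left_mono])
  obtain n\<^sub>0 where bounds: "\<And>n. n\<^sub>0 \<le> n \<Longrightarrow> real n powr \<alpha> \<le> t * g n \<and> g n \<le> t * real n powr \<alpha>"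
    using n_alpha_type_eventually_bounds[OF g \<open>1 < t\<close>] by blast
  show thesis
  proof (rule that[OF \<open>0 < \<rho>\<close> \<open>\<rho> < 1\<close>])
    fix M i assume "real n\<^sub>0 \<le> a * M" and "a * M < real i"
    then show "(c * M) powr \<alpha> \<le> \<rho> * g i"
      using bounds g_nonneg \<open>0 < \<alpha>\<close> assms(2-4) \<open>t * (c / a) powr \<alpha> \<le> \<rho>\<close>
      by (intro powr_scale_le_of_lower_bound[where n\<^sub>0 = n\<^sub>0 and t = t and a = a]) auto
  next
    fix M i assume "real n\<^sub>0 \<le> a' * M" and "real i \<le> a' * M"
    then show "g i \<le> \<rho> * (c * M) powr \<alpha>"
      using bounds \<open>mono g\<close> \<open>0 < \<alpha>\<close> \<open>1 < t\<close> assms(2-4) \<open>t * (a' / c) powr \<alpha> \<le> \<rho>\<close>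
      by (intro le_powr_scale_of_upper_bound[where n\<^sub>0 = n\<^sub>0 and t = t and a' = a']) auto
  qed
qed

lemma deviation_in_tails:
  fixes M c \<delta> a' :: real
  assumes "0 < M" and "0 \<le> c" and "0 < \<delta>" and "c - \<delta> / 2 \<le> a'"
    and "\<delta> \<le> \<bar>real n / M - c\<bar>"
  shows "n + nat \<lfloor>\<delta> / 2 * M\<rfloor> \<le> nat \<lfloor>a' * M\<rfloor> \<or> nat \<lfloor>(c + \<delta> / 2) * M\<rfloor> + nat \<lfloor>\<delta> / 2 * M\<rfloor> \<le> n"
proof -
  have "real n / M \<le> c - \<delta> \<or> c + \<delta> \<le> real n / M"
    using assms(5) by linarith
  then have "real n \<le> (c - \<delta>) * M \<or> (c + \<delta>) * M \<le> real n"
    using \<open>0 < M\<close> by (auto simp: field_simps)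
  moreover have "real (nat \<lfloor>\<delta> / 2 * M\<rfloor>) \<le> \<delta> / 2 * M"
    by (rule of_nat_floor) (use assms(1,3) in simp)
  moreover have "real (nat \<lfloor>(c + \<delta> / 2) * M\<rfloor>) \<le> (c + \<delta> / 2) * M"
    by (rule of_nat_floor) (use assms(1-3) in simp)
  moreover have "(c - \<delta>) * M + \<delta> / 2 * M \<le> a' * M"
    using mult_right_mono[OF assms(4), of M] assms(1) by (simp add: algebra_simps)
  ultimately have "real (n + nat \<lfloor>\<delta> / 2 * M\<rfloor>) \<le> a' * M \<or>
      real (nat \<lfloor>(c + \<delta> / 2) * M\<rfloor> + nat \<lfloor>\<delta> / 2 * M\<rfloor>) \<le> real n"
    by (auto simp: algebra_simps)
  then show ?thesis
    using le_nat_floor of_nat_le_iff by blast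
qed

lemma Pevent_deviation_le:
  assumes gpos: "\<And>n. 0 < n \<Longrightarrow> 0 < g n" and "0 < M" and "0 < c" and "0 < \<delta>" and "\<rho> < 1"
    and "c - \<delta> / 2 \<le> a'"
    and above: "\<And>i. nat \<lfloor>(c + \<delta> / 2) * M\<rfloor> < i \<Longrightarrow> (c * M) powr \<alpha> \<le> \<rho> * g i"
    and below: "\<And>i. 0 < i \<Longrightarrow> i \<le> nat \<lfloor>a' * M\<rfloor> \<Longrightarrow> g i \<le> \<rho> * (c * M) powr \<alpha>"
  shows "0 \<le> Pevent g ((c * M) powr \<alpha>) {n. \<delta> \<le> \<bar>real n / M - c\<bar>}"
    and "Pevent g ((c * M) powr \<alpha>) {n. \<delta> \<le> \<bar>real n / M - c\<bar>} \<le> 2 * \<rho> ^ nat \<lfloor>\<delta> / 2 * M\<rfloor> / (1 - \<rho>)"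
proof -
  have "0 < (c * M) powr \<alpha>"
    using \<open>0 < c\<close> \<open>0 < M\<close> by simp
  then have "summable (gweight g ((c * M) powr \<alpha>))"
    by (intro summable_gweight[OF gpos _ \<open>\<rho> < 1\<close> above]) auto
  then show "0 \<le> Pevent g ((c * M) powr \<alpha>) {n. \<delta> \<le> \<bar>real n / M - c\<bar>}"
    using \<open>0 < (c * M) powr \<alpha>\<close> by (intro Pevent_nonneg[OF gpos]) auto
  show "Pevent g ((c * M) powr \<alpha>) {n. \<delta> \<le> \<bar>real n / M - c\<bar>} \<le> 2 * \<rho> ^ nat \<lfloor>\<delta> / 2 * M\<rfloor> / (1 - \<rho>)"
    using above below deviation_in_tails[of M c \<delta> a'] assms(2-4,6)
    by (intro Pevent_le_two_tails[OF gpos \<open>0 < (c * M) powr \<alpha>\<close> \<open>\<rho> < 1\<close>,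
          where m\<^sub>1 = "nat \<lfloor>(c + \<delta> / 2) * M\<rfloor>" and m\<^sub>2 = "nat \<lfloor>a' * M\<rfloor>"]) auto
qed

lemma Pevent_deviation_exponentially_small:
  assumes g: "n_alpha_type g \<alpha>" and "0 < c" and "0 < \<delta>"
  obtains \<kappa> where "0 < \<kappa>"
    and "\<forall>\<^sub>F M in at_top.
          0 \<le> Pevent g ((c * M) powr \<alpha>) {n. \<delta> \<le> \<bar>real n / M - c\<bar>} \<and>
          Pevent g ((c * M) powr \<alpha>) {n. \<delta> \<le> \<bar>real n / M - c\<bar>} \<le> exp (- \<kappa> * M)"
proof -
  define a where "a = c + \<delta> / 2"
  define a' where "a' = max (c - \<delta> / 2) (c / 2)"
  have "0 < a'" "a' < c" "c < a" "a' \<le> a" "c - \<delta> / 2 \<le> a'"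
    using assms(2,3) by (auto simp: a_def a'_def)
  obtain \<rho> n\<^sub>0 where "0 < \<rho>" "\<rho> < 1"
    and above: "\<And>M i. real n\<^sub>0 \<le> a * M \<Longrightarrow> a * M < real i \<Longrightarrow> (c * M) powr \<alpha> \<le> \<rho> * g i"
    and below: "\<And>M i. real n\<^sub>0 \<le> a' * M \<Longrightarrow> real i \<le> a' * M \<Longrightarrow> g i \<le> \<rho> * (c * M) powr \<alpha>"
    using n_alpha_type_ratio_bounds[OF g \<open>0 < a'\<close> \<open>a' < c\<close> \<open>c < a\<close>] by blast
  define L where "L = - ln \<rho>"
  have "0 < L"
    using \<open>0 < \<rho>\<close> \<open>\<rho> < 1\<close> by (simp add: L_def)
  have exp_decay: "\<forall>\<^sub>F M in at_top. C * exp (- L * (\<delta> / 2 * M - 1)) \<le> exp (- (L * \<delta> / 4) * M)"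
    if "0 < C" for C
    using that \<open>0 < L\<close> \<open>0 < \<delta>\<close> by real_asymp
  have "0 < 2 / (1 - \<rho>)"
    using \<open>\<rho> < 1\<close> by simp
  then have "\<forall>\<^sub>F M in at_top. 2 / (1 - \<rho>) * exp (- L * (\<delta> / 2 * M - 1)) \<le> exp (- (L * \<delta> / 4) * M)"
    by (rule exp_decay)
  then have "\<forall>\<^sub>F M in at_top.
          0 \<le> Pevent g ((c * M) powr \<alpha>) {n. \<delta> \<le> \<bar>real n / M - c\<bar>} \<and>
          Pevent g ((c * M) powr \<alpha>) {n. \<delta> \<le> \<bar>real n / M - c\<bar>} \<le> exp (- (L * \<delta> / 4) * M)"
    using eventually_gt_at_top[of 0] eventually_ge_at_top[of "real n\<^sub>0 / a'"]
  proof eventually_elim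
    case (elim M)
    then have "0 < M" and "real n\<^sub>0 \<le> a' * M"
      using \<open>0 < a'\<close> by (auto simp: field_simps)
    have "real n\<^sub>0 \<le> a * M"
      using \<open>real n\<^sub>0 \<le> a' * M\<close> mult_right_mono[OF \<open>a' \<le> a\<close>, of M] \<open>0 < M\<close> by linarith
    have above_M: "(c * M) powr \<alpha> \<le> \<rho> * g i" if "nat \<lfloor>(c + \<delta> / 2) * M\<rfloor> < i" for i
      using that \<open>real n\<^sub>0 \<le> a * M\<close> unfolding a_def by (intro above[unfolded a_def]) linarith+
    have below_M: "g i \<le> \<rho> * (c * M) powr \<alpha>" if "0 < i" and "i \<le> nat \<lfloor>a' * M\<rfloor>" for i
      using that \<open>real n\<^sub>0 \<le> a' * M\<close> by (intro below) linarith+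
    note bounds = Pevent_deviation_le[where g = g, OF n_alpha_type_pos[OF g] \<open>0 < M\<close> \<open>0 < c\<close> \<open>0 < \<delta>\<close>
        \<open>\<rho> < 1\<close> \<open>c - \<delta> / 2 \<le> a'\<close> above_M below_M]
    have "\<rho> ^ nat \<lfloor>\<delta> / 2 * M\<rfloor> \<le> exp (- L * (\<delta> / 2 * M - 1))"
      using power_nat_floor_le_exp[OF \<open>0 < \<rho>\<close>, of "\<delta> / 2 * M"] \<open>\<rho> < 1\<close> by (simp add: L_def)
    then have "2 * \<rho> ^ nat \<lfloor>\<delta> / 2 * M\<rfloor> / (1 - \<rho>) \<le> 2 / (1 - \<rho>) * exp (- L * (\<delta> / 2 * M - 1))"
      using \<open>\<rho> < 1\<close> by (simp add: divide_right_mono)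
    with bounds elim(1) show ?case
      by linarith
  qed
  then show thesis
    using \<open>0 < L\<close> \<open>0 < \<delta>\<close> by (intro that[of "L * \<delta> / 4"]) auto
qed

lemma Pevent_deviation_exponentially_small_powr:
  assumes g: "n_alpha_type g \<alpha>" and "0 < \<beta>" and "0 \<le> \<phi>" and "0 < \<delta>"
  obtains \<kappa> where "0 < \<kappa>"
    and "\<forall>\<^sub>F N in sequentially.
          0 \<le> Pevent g (real N powr \<beta> * \<phi>)
                 {n. \<bar>real N powr (- \<beta> / \<alpha>) * real n - \<phi> powr (1 / \<alpha>)\<bar> \<ge> \<delta>} \<and>
          Pevent g (real N powr \<beta> * \<phi>)
                 {n. \<bar>real N powr (- \<beta> / \<alpha>) * real n - \<phi> powr (1 / \<alpha>)\<bar> \<ge> \<delta>}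
            \<le> exp (- \<kappa> * real N powr (\<beta> / \<alpha>))"
proof (cases "\<phi> = 0")
  case True
  then show thesis
    using \<open>0 < \<delta>\<close> by (intro that[of 1]) (simp_all add: Pevent_zero_weight)
next
  case False
  define c where "c = \<phi> powr (1 / \<alpha>)"
  have "0 < \<alpha>"
    using g by (simp add: n_alpha_type_def)
  have "0 < c"
    using False \<open>0 \<le> \<phi>\<close> by (simp add: c_def)
  obtain \<kappa> where "0 < \<kappa>" and bound: "\<forall>\<^sub>F M in at_top.
      0 \<le> Pevent g ((c * M) powr \<alpha>) {n. \<delta> \<le> \<bar>real n / M - c\<bar>} \<and>
      Pevent g ((c * M) powr \<alpha>) {n. \<delta> \<le> \<bar>real n / M - c\<bar>} \<le> exp (- \<kappa> * M)"
    using Pevent_deviation_exponentially_small[OF g \<open>0 < c\<close> \<open>0 < \<delta>\<close>] by blast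
  have "filterlim (\<lambda>N::nat. real N powr (\<beta> / \<alpha>)) at_top sequentially"
    using \<open>0 < \<alpha>\<close> \<open>0 < \<beta>\<close> by real_asymp
  from eventually_compose_filterlim[OF bound this] show thesis
    using \<open>0 < \<alpha>\<close> \<open>0 \<le> \<phi>\<close>
    by (intro that[OF \<open>0 < \<kappa>\<close>]) (simp add: c_def powr_mult powr_powr powr_minus_divide mult.commute)
qed

lemma scaled_lnE_tendsto_MInfty:
  fixes P :: "nat \<Rightarrow> real"
  assumes bound: "\<forall>\<^sub>F N in sequentially. 0 \<le> P N \<and> P N \<le> exp (- \<kappa> * real N powr p)"
    and "0 < \<kappa>" and "r\<^sub>0 < p"
  shows "((\<lambda>N. ereal (real N powr (- r\<^sub>0)) * lnE (P N)) \<longlongrightarrow> -\<infinity>) sequentially"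
proof -
  have "filterlim (\<lambda>N::nat. - \<kappa> * real N powr q) at_bot sequentially" if "0 < q" for q
    using that \<open>0 < \<kappa>\<close> by real_asymp
  then have lim: "filterlim (\<lambda>N::nat. - \<kappa> * real N powr (p - r\<^sub>0)) at_bot sequentially"
    using \<open>r\<^sub>0 < p\<close> by simp
  have le: "\<forall>\<^sub>F N in sequentially. ereal (real N powr (- r\<^sub>0)) * lnE (P N) \<le> ereal (- \<kappa> * real N powr (p - r\<^sub>0))"
    using bound eventually_gt_at_top[of 0]
  proof eventually_elim
    case (elim N)
    then have "0 < real N powr (- r\<^sub>0)"
      by simp
    show ?case
    proof (cases "P N = 0")
      case True
      with \<open>0 < real N powr (- r\<^sub>0)\<close> show ?thesis
        by (simp add: lnE_def)
    next
      case False
      with elim have "ln (P N) \<le> ln (exp (- \<kappa> * real N powr p))"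
        by (subst ln_le_cancel_iff) auto
      then have "ln (P N) \<le> - \<kappa> * real N powr p"
        by simp
      then have "real N powr (- r\<^sub>0) * ln (P N) \<le> real N powr (- r\<^sub>0) * (- \<kappa> * real N powr p)"
        using \<open>0 < real N powr (- r\<^sub>0)\<close> by (intro mult_left_mono) auto
      also have "\<dots> = - \<kappa> * real N powr (p - r\<^sub>0)"
        by (simp add: powr_add[symmetric])
      finally show ?thesis
        using False by (simp add: lnE_def)
    qed
  qed
  show ?thesis
    unfolding tendsto_MInfty
  proof
    fix r :: real
    have "\<forall>\<^sub>F N in sequentially. - \<kappa> * real N powr (p - r\<^sub>0) < r"
      using lim by (simp add: filterlim_at_bot_dense)
    with le show "\<forall>\<^sub>F N in sequentially. ereal (real N powr (- r\<^sub>0)) * lnE (P N) < ereal r"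
      by eventually_elim (auto elim: le_less_trans)
  qed
qed

theorem mainTheorem13:
  fixes g :: "nat \<Rightarrow> real" and \<alpha> \<beta> \<phi> r0 \<delta> :: real
  assumes "n_alpha_type g \<alpha>" and "\<beta> > \<alpha>" and "\<phi> \<ge> 0"
    and "r0 < \<beta> / \<alpha>" and "\<delta> > 0"
  shows "((\<lambda>N::nat. ereal (real N powr (- r0)) *
            lnE (Pevent g (real N powr \<beta> * \<phi>)
                  {n. \<bar>real N powr (- \<beta> / \<alpha>) * real n - \<phi> powr (1 / \<alpha>)\<bar> \<ge> \<delta>}))
          \<longlongrightarrow> -\<infinity>) sequentially"
proof -
  have "0 < \<beta>"
    using assms(1,2) by (simp add: n_alpha_type_def)
  obtain \<kappa> where "0 < \<kappa>" and bound: "\<forall>\<^sub>F N in sequentially.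
      0 \<le> Pevent g (real N powr \<beta> * \<phi>)
             {n. \<bar>real N powr (- \<beta> / \<alpha>) * real n - \<phi> powr (1 / \<alpha>)\<bar> \<ge> \<delta>} \<and>
      Pevent g (real N powr \<beta> * \<phi>)
             {n. \<bar>real N powr (- \<beta> / \<alpha>) * real n - \<phi> powr (1 / \<alpha>)\<bar> \<ge> \<delta>}
        \<le> exp (- \<kappa> * real N powr (\<beta> / \<alpha>))"
    using Pevent_deviation_exponentially_small_powr[OF assms(1) \<open>0 < \<beta>\<close> assms(3,5)] by blast
  show ?thesis
    using bound \<open>0 < \<kappa>\<close> assms(4) by (rule scaled_lnE_tendsto_MInfty)
qed

end
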